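(* Let $d\in\mathbb{N}$, let $I$ be a set and $(A_{i})_{i\in I}$ a collection of pairwise disjoint open subsets of $\mathbb{R}^d$ such that $\mathbb{R}^{d}=\bigcup_{i\in I}\overline{A_{i}}$. Let $C\geq 1$ and let $f\colon \mathbb{R}^{d}\to \mathbb{R}^{d}$ be a mapping such that the restriction $f|_{\bigcup_{i\in I}\partial A_{i}}$ is $C$-bilipschitz and for every $i\in I$ the restriction $f|_{\overline{A_{i}}}$ is $C$-bilipschitz and $f(\overline{A_i})=\overline{A_i}$. Then $f$ is $C$-bilipschitz.
   Context: $\overline{A}$ and $\partial A$ denote closure and boundary in $\mathbb{R}^d$. A mapping is $C$-bilipschitz if it is injective and both it and its inverse (on its image) are $C$-Lipschitz with respect to the Euclidean norm. *)

theory Defs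
  imports "HOL-Analysis.Analysis"
begin

definition bilipschitz_on :: "real \<Rightarrow> 'a::metric_space set \<Rightarrow> ('a \<Rightarrow> 'b::metric_space) \<Rightarrow> bool" where
  "bilipschitz_on C S f \<longleftrightarrow> inj_on f S \<and>
     (\<forall>x\<in>S. \<forall>y\<in>S. dist (f x) (f y) \<le> C * dist x y) \<and>
     (\<forall>u\<in>f ` S. \<forall>v\<in>f ` S. dist (the_inv_into S f u) (the_inv_into S f v) \<le> C * dist u v)"

end

theory Submission
  imports Defs
begin

(* Write K_i for the closed tiles closure (A i) and B for the union of their boundaries.
   For x, y in different tiles, the segment from x to y leaves the tile of x at a point
   p of its frontier and enters the tile of y at a point q of its frontier, so
   |x - y| = |x - p| + |p - q| + |q - y|; each of the three distances is stretched by at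
   most C, since f is C-Lipschitz on each K_i and on B. The same argument applied to
   f^-1 gives the reverse inequality, once we know that frontier K_i is contained in
   f ` B. That is where invariance of domain enters: f maps the open set A i
   injectively and continuously into K_i, hence onto an open subset of K_i, hence into
   its interior, so a point of K_i whose image is not interior lies in frontier (A i).
   The same fact gives injectivity: if f x = f y for x, y in different tiles, then
   f x lies in two tiles and hence in neither interior, so x, y are in B. *)

lemma bilipschitz_on_iff_lipschitz_on:
  assumes "C \<ge> 0"
  shows "bilipschitz_on C S f \<longleftrightarrow>
    inj_on f S \<and> C-lipschitz_on S f \<and> C-lipschitz_on (f ` S) (the_inv_into S f)"
  using assms by (auto simp: bilipschitz_on_def lipschitz_on_def)

lemma lipschitz_on_the_inv_image:
  assumes "bilipschitz_on C S f" "inj f" "C \<ge> 0"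
  shows "C-lipschitz_on (f ` S) (the_inv f)"
proof -
  have "the_inv_into S f u = the_inv f u" if "u \<in> f ` S" for u
    using that assms(2) by (auto simp: the_inv_into_f_f inj_on_subset)
  then show ?thesis
    using assms by (auto simp: bilipschitz_on_iff_lipschitz_on lipschitz_on_def)
qed

lemma dist_add_dist_closed_segment:
  fixes x y p :: "'a::euclidean_space"
  assumes "p \<in> closed_segment x y"
  shows "dist x p + dist p y = dist x y"
  using assms between[of x y p] between_mem_segment[of x y p] by simp

lemma closed_segment_meets_frontier:
  fixes x y :: "'a::real_normed_vector"
  assumes "x \<in> S" "y \<notin> interior S"
  obtains p where "p \<in> closed_segment x y" "p \<in> frontier S"
proof (cases "y \<in> S")
  case True
  with assms(2) have "y \<in> frontier S"
    using closure_subset by (auto simp: frontier_def)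
  with that show ?thesis by auto
next
  case False
  have "closed_segment x y \<inter> frontier S \<noteq> {}"
    by (rule connected_Int_frontier) (use assms False in auto)
  with that show ?thesis by auto
qed

lemma closed_segment_crosses_frontiers:
  fixes x y :: "'a::euclidean_space"
  assumes "closed K" "closed L" "x \<in> K" "y \<in> L"
    and "interior K \<inter> L = {}" "K \<inter> interior L = {}"
  obtains p q where "p \<in> frontier K" "q \<in> frontier L"
    "dist x p + dist p q + dist q y = dist x y"
proof -
  obtain q where q: "q \<in> closed_segment y x" "q \<in> frontier L"
    using closed_segment_meets_frontier[of y L x] assms by blast
  have "q \<notin> interior K"
    using q(2) assms frontier_subset_closed by blast
  then obtain p where p: "p \<in> closed_segment x q" "p \<in> frontier K"
    using closed_segment_meets_frontier[of x K q] assms by blast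
  have "dist x p + dist p q + dist q y = dist x y"
    using dist_add_dist_closed_segment[OF p(1)] dist_add_dist_closed_segment[OF q(1)]
    by (simp add: dist_commute)
  with p q that show ?thesis by blast
qed

lemma lipschitz_on_UNIV_closed_pieces:
  fixes g :: "'a::euclidean_space \<Rightarrow> 'b::metric_space"
  assumes closed: "\<And>K. K \<in> \<K> \<Longrightarrow> closed K" and cover: "\<Union>\<K> = UNIV"
    and interior_disjoint: "\<And>K L. K \<in> \<K> \<Longrightarrow> L \<in> \<K> \<Longrightarrow> K \<noteq> L \<Longrightarrow> interior K \<inter> L = {}"
    and pieces: "\<And>K. K \<in> \<K> \<Longrightarrow> C-lipschitz_on K g"
    and boundary: "C-lipschitz_on B g" "\<And>K. K \<in> \<K> \<Longrightarrow> frontier K \<subseteq> B"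
  shows "C-lipschitz_on UNIV g"
proof (rule lipschitz_onI)
  show "0 \<le> C" using lipschitz_on_nonneg[OF boundary(1)] .
  fix x y :: 'a
  obtain K L where K: "K \<in> \<K>" "x \<in> K" and L: "L \<in> \<K>" "y \<in> L"
    using cover by blast
  show "dist (g x) (g y) \<le> C * dist x y"
  proof (cases "K = L")
    case True
    then show ?thesis using lipschitz_onD[OF pieces] K L by blast
  next
    case False
    obtain p q where p: "p \<in> frontier K" and q: "q \<in> frontier L"
      and pq: "dist x p + dist p q + dist q y = dist x y"
      using closed_segment_crosses_frontiers[of K L x y] closed K L False interior_disjoint
      by blast
    have "p \<in> K" "q \<in> L" "p \<in> B" "q \<in> B"
      using p q closed boundary(2) K(1) L(1) frontier_subset_closed by blast+
    have "dist (g x) (g y) \<le> dist (g x) (g p) + dist (g p) (g q) + dist (g q) (g y)"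
      using dist_triangle[of "g x" "g y" "g p"] dist_triangle[of "g p" "g y" "g q"] by linarith
    also have "\<dots> \<le> C * dist x p + C * dist p q + C * dist q y"
      using lipschitz_onD[OF pieces[OF K(1)] K(2) \<open>p \<in> K\<close>]
        lipschitz_onD[OF boundary(1) \<open>p \<in> B\<close> \<open>q \<in> B\<close>]
        lipschitz_onD[OF pieces[OF L(1)] \<open>q \<in> L\<close> L(2)]
      by linarith
    also have "\<dots> = C * dist x y"
      by (simp add: pq[symmetric] algebra_simps)
    finally show ?thesis .
  qed
qed

lemma interior_closure_Int_closure_eq_empty:
  assumes "open S" "open T" "S \<inter> T = {}"
  shows "interior (closure S) \<inter> closure T = {}"
proof -
  have "T \<inter> interior (closure S) = {}"
    using assms open_Int_closure_eq_empty[of T S] interior_subset by blast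
  then show ?thesis
    using open_Int_closure_eq_empty[of "interior (closure S)" T] by blast
qed

lemma frontier_closure_subset: "frontier (closure S) \<subseteq> frontier S"
  by (auto simp: frontier_def dest: interior_mono[OF closure_subset, THEN subsetD])

lemma open_injective_image_subset_interior:
  fixes f :: "'a::euclidean_space \<Rightarrow> 'a"
  assumes "open S" "continuous_on S f" "inj_on f S" "f ` S \<subseteq> T"
  shows "f ` S \<subseteq> interior T"
  using interior_maximal[OF assms(4) invariance_of_domain[OF assms(2,1,3)]] .

lemma mem_frontier_if_image_notin_interior:
  fixes f :: "'a::euclidean_space \<Rightarrow> 'a"
  assumes "open A" "continuous_on A f" "inj_on f A" "f ` closure A \<subseteq> closure A"
    and "x \<in> closure A" "f x \<notin> interior (closure A)"
  shows "x \<in> frontier A"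
proof -
  have "f ` A \<subseteq> interior (closure A)"
    using assms(1-4) closure_subset by (intro open_injective_image_subset_interior) auto
  then show ?thesis
    using assms(1,5,6) by (auto simp: frontier_def interior_open)
qed

locale bilipschitz_on_closed_tiles =
  fixes A :: "'i \<Rightarrow> 'a::euclidean_space set"
    and I :: "'i set"
    and f :: "'a \<Rightarrow> 'a"
    and C :: real
  assumes open_A: "\<And>i. i \<in> I \<Longrightarrow> open (A i)"
    and disjoint_A: "\<And>i j. i \<in> I \<Longrightarrow> j \<in> I \<Longrightarrow> i \<noteq> j \<Longrightarrow> A i \<inter> A j = {}"
    and cover: "(\<Union>i\<in>I. closure (A i)) = UNIV"
    and C_nonneg: "C \<ge> 0"
    and bilipschitz_boundary: "bilipschitz_on C (\<Union>i\<in>I. frontier (A i)) f"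
    and bilipschitz_closure: "\<And>i. i \<in> I \<Longrightarrow> bilipschitz_on C (closure (A i)) f"
    and image_closure: "\<And>i. i \<in> I \<Longrightarrow> f ` closure (A i) = closure (A i)"
begin

abbreviation tiles :: "'a set set" where
  "tiles \<equiv> (\<lambda>i. closure (A i)) ` I"

abbreviation boundary :: "'a set" where
  "boundary \<equiv> \<Union>i\<in>I. frontier (A i)"

lemma closed_tile: "K \<in> tiles \<Longrightarrow> closed K"
  by blast

lemma Union_tiles: "\<Union>tiles = UNIV"
  by (fact cover)

lemma image_tile: "K \<in> tiles \<Longrightarrow> f ` K = K"
  using image_closure by blast

lemma bilipschitz_on_tile: "K \<in> tiles \<Longrightarrow> bilipschitz_on C K f"
  using bilipschitz_closure by blast

lemma lipschitz_on_tile: "K \<in> tiles \<Longrightarrow> C-lipschitz_on K f"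
  and inj_on_tile: "K \<in> tiles \<Longrightarrow> inj_on f K"
  using bilipschitz_on_tile C_nonneg by (auto simp: bilipschitz_on_iff_lipschitz_on)

lemma lipschitz_on_boundary: "C-lipschitz_on boundary f"
  and inj_on_boundary: "inj_on f boundary"
  using bilipschitz_boundary C_nonneg by (auto simp: bilipschitz_on_iff_lipschitz_on)

lemma interior_tile_Int_tile:
  assumes "K \<in> tiles" "L \<in> tiles" "K \<noteq> L"
  shows "interior K \<inter> L = {}"
proof -
  obtain i j where "i \<in> I" "j \<in> I" "K = closure (A i)" "L = closure (A j)"
    using assms(1,2) by blast
  with assms(3) show ?thesis
    using interior_closure_Int_closure_eq_empty[OF open_A open_A disjoint_A] by blast
qed

lemma frontier_tile_subset_boundary: "K \<in> tiles \<Longrightarrow> frontier K \<subseteq> boundary"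
  using frontier_closure_subset by blast

lemma mem_boundary_if_image_notin_interior:
  assumes "K \<in> tiles" "x \<in> K" "f x \<notin> interior K"
  shows "x \<in> boundary"
proof -
  obtain i where i: "i \<in> I" "K = closure (A i)"
    using assms(1) by blast
  have "A i \<subseteq> K"
    using i(2) closure_subset by blast
  then have "continuous_on (A i) f" "inj_on f (A i)"
    using continuous_on_subset[OF lipschitz_on_continuous_on[OF lipschitz_on_tile[OF assms(1)]]]
      inj_on_subset[OF inj_on_tile[OF assms(1)]]
    by blast+
  then have "x \<in> frontier (A i)"
    using mem_frontier_if_image_notin_interior[OF open_A[OF i(1)]] image_closure[OF i(1)] assms i(2)
    by auto
  with i(1) show ?thesis by blast
qed

lemma frontier_tile_subset_image_boundary:
  assumes K: "K \<in> tiles"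
  shows "frontier K \<subseteq> f ` boundary"
proof
  fix p assume p: "p \<in> frontier K"
  then obtain a where a: "a \<in> K" "p = f a"
    using image_tile[OF K] frontier_subset_closed[OF closed_tile[OF K]] by auto
  have "f a \<notin> interior K"
    using p a(2) by (simp add: frontier_def)
  then show "p \<in> f ` boundary"
    unfolding a(2) by (rule imageI[OF mem_boundary_if_image_notin_interior[OF K a(1)]])
qed

lemma inj: "inj f"
proof (rule injI)
  fix x y assume fxy: "f x = f y"
  have "x \<in> \<Union>tiles" "y \<in> \<Union>tiles"
    unfolding Union_tiles by simp_all
  then obtain K L where K: "K \<in> tiles" "x \<in> K" and L: "L \<in> tiles" "y \<in> L"
    by blast
  show "x = y"
  proof (cases "K = L")
    case True
    then show ?thesis using inj_onD[OF inj_on_tile fxy] K L by blast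
  next
    case False
    have "f x \<in> K" "f y \<in> L"
      using imageI[of x K f] imageI[of y L f] K L by (simp_all add: image_tile)
    then have "f x \<notin> interior K" "f y \<notin> interior L"
      using interior_tile_Int_tile[OF K(1) L(1) False] interior_tile_Int_tile[OF L(1) K(1)]
        False fxy
      by auto
    then have "x \<in> boundary" "y \<in> boundary"
      using mem_boundary_if_image_notin_interior K L by blast+
    then show ?thesis
      using inj_onD[OF inj_on_boundary fxy] by blast
  qed
qed

lemma surj: "surj f"
proof -
  have "f ` (\<Union>i\<in>I. closure (A i)) = (\<Union>i\<in>I. closure (A i))"
    by (simp add: image_UN image_closure)
  then show ?thesis
    by (simp add: cover)
qed

lemma lipschitz_on_UNIV: "C-lipschitz_on UNIV f"
  using closed_tile Union_tiles interior_tile_Int_tile lipschitz_on_tile lipschitz_on_boundary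
    frontier_tile_subset_boundary
  by (rule lipschitz_on_UNIV_closed_pieces)

lemma lipschitz_on_the_inv_tile:
  assumes "K \<in> tiles"
  shows "C-lipschitz_on K (the_inv f)"
  using lipschitz_on_the_inv_image[OF bilipschitz_on_tile[OF assms] inj C_nonneg] image_tile[OF assms]
  by simp

lemma lipschitz_on_the_inv_boundary: "C-lipschitz_on (f ` boundary) (the_inv f)"
  by (rule lipschitz_on_the_inv_image[OF bilipschitz_boundary inj C_nonneg])

lemma lipschitz_on_UNIV_the_inv: "C-lipschitz_on UNIV (the_inv f)"
  using closed_tile Union_tiles interior_tile_Int_tile lipschitz_on_the_inv_tile
    lipschitz_on_the_inv_boundary frontier_tile_subset_image_boundary
  by (rule lipschitz_on_UNIV_closed_pieces)

lemma bilipschitz_on_UNIV: "bilipschitz_on C UNIV f"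
  using inj surj lipschitz_on_UNIV lipschitz_on_UNIV_the_inv C_nonneg
  by (simp add: bilipschitz_on_iff_lipschitz_on)

end

theorem lemma3p4:
  fixes A :: "'i \<Rightarrow> 'a::euclidean_space set"
    and I :: "'i set"
    and f :: "'a \<Rightarrow> 'a"
    and C :: real
  assumes open_A: "\<And>i. i \<in> I \<Longrightarrow> open (A i)"
    and disj: "\<And>i j. i \<in> I \<Longrightarrow> j \<in> I \<Longrightarrow> i \<noteq> j \<Longrightarrow> A i \<inter> A j = {}"
    and cover: "(\<Union>i\<in>I. closure (A i)) = UNIV"
    and C: "C \<ge> 1"
    and bd: "bilipschitz_on C (\<Union>i\<in>I. frontier (A i)) f"
    and pieces: "\<And>i. i \<in> I \<Longrightarrow> bilipschitz_on C (closure (A i)) f"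
    and inv: "\<And>i. i \<in> I \<Longrightarrow> f ` closure (A i) = closure (A i)"
  shows "bilipschitz_on C UNIV f"
proof -
  interpret bilipschitz_on_closed_tiles A I f C
    using assms by unfold_locales auto
  show ?thesis by (rule bilipschitz_on_UNIV)
qed

end
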